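(* Let $G$ be an infinite group and $\vec m=(m_1,\dots,m_k)\in\mathbb{Z}^k$, $k\in\mathbb{N}$. Then (i) a subset $A\subseteq G$ is a Ramsey $\vec m$-product subset if and only if every infinite subset $X\subseteq G$ contains a countably infinite subset $Y$ such that $y_1^{m_1}y_2^{m_2}\cdots y_k^{m_k}\in A$ for all pairwise distinct $y_1,\dots,y_k\in Y$; (ii) the family $\varphi_{\vec m}$ of all Ramsey $\vec m$-product subsets of $G$ is a filter on $G$.
   Context: A subset $A$ of a group $G$ is a Ramsey $\vec m$-product subset, for $\vec m=(m_1,\dots,m_k)\in\mathbb{Z}^k$, if every infinite subset $X\subseteq G$ contains pairwise distinct $x_1,\dots,x_k\in X$ such that $x_{\sigma(1)}^{m_1}x_{\sigma(2)}^{m_2}\cdots x_{\sigma(k)}^{m_k}\in A$ for every permutation $\sigma\in S_k$. *)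

theory Defs
  imports "HOL-Algebra.Group" "HOL-Combinatorics.Permutations" "HOL-Library.Countable_Set"
begin

(* The word x_0^{m_0} x_1^{m_1} ... x_{k-1}^{m_{k-1}} in G, where k = length m
   (indices shifted to start at 0), with integer powers. *)
definition word_prod :: "('a, 'b) monoid_scheme \<Rightarrow> int list \<Rightarrow> (nat \<Rightarrow> 'a) \<Rightarrow> 'a" where
  "word_prod G m x =
     foldr (\<lambda>i acc. (x i [^]\<^bsub>G\<^esub> (m ! i)) \<otimes>\<^bsub>G\<^esub> acc) [0..<length m] \<one>\<^bsub>G\<^esub>"

definition ramsey_product :: "('a, 'b) monoid_scheme \<Rightarrow> int list \<Rightarrow> 'a set \<Rightarrow> bool" where
  "ramsey_product G m A \<longleftrightarrow> A \<subseteq> carrier G \<and>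
     (\<forall>X. X \<subseteq> carrier G \<longrightarrow> infinite X \<longrightarrow>
        (\<exists>x. inj_on x {..<length m} \<and> x ` {..<length m} \<subseteq> X \<and>
             (\<forall>\<sigma>. \<sigma> permutes {..<length m} \<longrightarrow> word_prod G m (x \<circ> \<sigma>) \<in> A)))"

definition filter_on_set :: "'a set \<Rightarrow> 'a set set \<Rightarrow> bool" where
  "filter_on_set S F \<longleftrightarrow> F \<subseteq> Pow S \<and> S \<in> F \<and> {} \<notin> F \<and>
     (\<forall>A\<in>F. \<forall>B\<in>F. A \<inter> B \<in> F) \<and>
     (\<forall>A\<in>F. \<forall>B. A \<subseteq> B \<and> B \<subseteq> S \<longrightarrow> B \<in> F)"

end

theory Submission
  imports Defs "HOL-Library.Ramsey"
begin

text \<open>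
  Colour each k-element subset S of an infinite X by whether every injective enumeration of S
  spells a word in A. By Ramsey's theorem some infinite Y \<subseteq> X is monochromatic, and the Ramsey
  property applied to Y itself yields a k-subset of the good colour; hence any k distinct points
  of Y, in any order, give words in A. Conversely such a Y contains k distinct points. For the
  filter property, the sets Y for A and then for B can be chosen one inside the other, and A = {}
  fails because an infinite set contains k distinct points.
\<close>

definition distinct_words_in :: "('a, 'b) monoid_scheme \<Rightarrow> int list \<Rightarrow> 'a set \<Rightarrow> 'a set \<Rightarrow> bool"
  where "distinct_words_in G m Y A \<longleftrightarrow>
    (\<forall>y. inj_on y {..<length m} \<and> y ` {..<length m} \<subseteq> Y \<longrightarrow> word_prod G m y \<in> A)"

lemma word_prod_cong:
  assumes "\<And>i. i < length m \<Longrightarrow> x i = y i"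
  shows "word_prod G m x = word_prod G m y"
  unfolding word_prod_def by (rule foldr_cong) (auto simp: assms)

lemma word_prod_closed:
  fixes G (structure)
  assumes "group G" "x ` {..<length m} \<subseteq> carrier G"
  shows "word_prod G m x \<in> carrier G"
proof -
  interpret group G by (rule assms(1))
  have "foldr (\<lambda>i acc. x i [^] (m ! i) \<otimes> acc) is \<one> \<in> carrier G" if "set is \<subseteq> {..<length m}" for "is"
    using that by (induction "is") (use assms(2) in auto)
  from this[of "[0..<length m]"] show ?thesis by (simp add: word_prod_def atLeast0LessThan)
qed

lemma inj_on_tuple_in_infinite:
  assumes "infinite Y"
  obtains x where "inj_on x {..<k::nat}" "x ` {..<k} \<subseteq> Y"
proof -
  obtain f :: "nat \<Rightarrow> _" where "inj f" "range f \<subseteq> Y"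
    using infinite_countable_subset[OF assms] by blast
  then show ?thesis using that[of f] by (auto intro: inj_on_subset)
qed

lemma permutes_reindex_same_image:
  assumes "inj_on x I" "inj_on y I" "y ` I = x ` I"
  obtains \<sigma> where "\<sigma> permutes I" "\<And>i. i \<in> I \<Longrightarrow> y i = x (\<sigma> i)"
proof -
  define \<sigma> where "\<sigma> i = (if i \<in> I then inv_into I x (y i) else i)" for i
  have "bij_betw y I (x ` I)"
    using assms by (simp add: bij_betw_def)
  then have "bij_betw (inv_into I x \<circ> y) I I"
    using bij_betw_inv_into[OF inj_on_imp_bij_betw[OF assms(1)]] by (rule bij_betw_trans)
  then have "bij_betw \<sigma> I I"
    by (rule bij_betw_cong[THEN iffD1, rotated]) (simp add: \<sigma>_def)
  then have "\<sigma> permutes I"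
    by (rule bij_imp_permutes) (simp add: \<sigma>_def)
  moreover have "y i = x (\<sigma> i)" if "i \<in> I" for i
  proof -
    have "y i \<in> x ` I" using that assms(3) by blast
    then show ?thesis using that by (simp add: \<sigma>_def f_inv_into_f)
  qed
  ultimately show ?thesis by (rule that)
qed

lemma permutes_comp_inj_on_image:
  assumes "\<sigma> permutes I" "inj_on x I"
  shows "inj_on (x \<circ> \<sigma>) I" "(x \<circ> \<sigma>) ` I = x ` I"
proof -
  show "(x \<circ> \<sigma>) ` I = x ` I"
    by (metis image_comp permutes_image assms(1))
  show "inj_on (x \<circ> \<sigma>) I"
    using assms by (simp add: comp_inj_on permutes_inj_on permutes_image)
qed

lemma distinct_words_inD:
  "distinct_words_in G m Y A \<Longrightarrow> inj_on y {..<length m} \<Longrightarrow> y ` {..<length m} \<subseteq> Y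
    \<Longrightarrow> word_prod G m y \<in> A"
  unfolding distinct_words_in_def by blast

lemma distinct_words_in_mono:
  "distinct_words_in G m Y A \<Longrightarrow> Z \<subseteq> Y \<Longrightarrow> A \<subseteq> B \<Longrightarrow> distinct_words_in G m Z B"
  unfolding distinct_words_in_def by blast

lemma distinct_words_in_Int:
  "distinct_words_in G m Y A \<Longrightarrow> distinct_words_in G m Y B \<Longrightarrow> distinct_words_in G m Y (A \<inter> B)"
  unfolding distinct_words_in_def by blast

lemma distinct_words_in_carrier:
  "group G \<Longrightarrow> Y \<subseteq> carrier G \<Longrightarrow> distinct_words_in G m Y (carrier G)"
  unfolding distinct_words_in_def by (blast intro: word_prod_closed)

lemma not_distinct_words_in_empty:
  assumes "infinite Y"
  shows "\<not> distinct_words_in G m Y {}"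
proof -
  obtain y where "inj_on y {..<length m}" "y ` {..<length m} \<subseteq> Y"
    using inj_on_tuple_in_infinite[OF assms] .
  then show ?thesis unfolding distinct_words_in_def by blast
qed

lemma ramsey_productE:
  assumes "ramsey_product G m A" "X \<subseteq> carrier G" "infinite X"
  obtains x where "inj_on x {..<length m}" "x ` {..<length m} \<subseteq> X"
    "\<And>\<sigma>. \<sigma> permutes {..<length m} \<Longrightarrow> word_prod G m (x \<circ> \<sigma>) \<in> A"
  using assms unfolding ramsey_product_def by blast

lemma ramsey_product_imp_distinct_words_in:
  assumes A: "ramsey_product G m A" and X: "X \<subseteq> carrier G" "infinite X"
  obtains Y where "Y \<subseteq> X" "infinite Y" "distinct_words_in G m Y A"
proof -
  let ?I = "{..<length m}"
  define good where "good S \<longleftrightarrow> (\<forall>y. inj_on y ?I \<and> y ` ?I = S \<longrightarrow> word_prod G m y \<in> A)" for S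
  have colours: "\<forall>S. S \<subseteq> X \<and> finite S \<and> card S = length m \<longrightarrow> of_bool (good S) < (2::nat)"
    by simp
  from Ramsey[OF X(2) colours] obtain Y and t :: nat where Y: "Y \<subseteq> X" "infinite Y"
    and mono: "\<forall>S. S \<subseteq> Y \<and> finite S \<and> card S = length m \<longrightarrow> of_bool (good S) = t"
    by (elim exE conjE) (rule that)
  have good_image: "good (x ` ?I) \<longleftrightarrow> t = 1" if "inj_on x ?I" "x ` ?I \<subseteq> Y" for x
    using mono that card_image[OF that(1)] by (cases "good (x ` ?I)") auto
  obtain x where x: "inj_on x ?I" "x ` ?I \<subseteq> Y"
    and perm: "\<And>\<sigma>. \<sigma> permutes ?I \<Longrightarrow> word_prod G m (x \<circ> \<sigma>) \<in> A"
    by (rule ramsey_productE[OF A order_trans[OF Y(1) X(1)] Y(2)]) (rule that)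
  have "good (x ` ?I)"
    unfolding good_def
  proof (intro allI impI)
    fix y assume y: "inj_on y ?I \<and> y ` ?I = x ` ?I"
    obtain \<sigma> where "\<sigma> permutes ?I" "\<And>i. i \<in> ?I \<Longrightarrow> y i = x (\<sigma> i)"
      using permutes_reindex_same_image[OF x(1)] y by metis
    then show "word_prod G m y \<in> A"
      using perm word_prod_cong[of m y "x \<circ> \<sigma>" G] by simp
  qed
  then have "t = 1" using good_image[OF x] by simp
  have "distinct_words_in G m Y A"
    unfolding distinct_words_in_def
  proof (intro allI impI)
    fix y assume y: "inj_on y ?I \<and> y ` ?I \<subseteq> Y"
    then have "good (y ` ?I)" using good_image \<open>t = 1\<close> by simp
    with y show "word_prod G m y \<in> A" unfolding good_def by simp
  qed
  with Y show ?thesis by (rule that)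
qed

lemma ramsey_product_if_distinct_words_in:
  assumes "A \<subseteq> carrier G"
    and "\<And>X. X \<subseteq> carrier G \<Longrightarrow> infinite X \<Longrightarrow> \<exists>Y\<subseteq>X. infinite Y \<and> distinct_words_in G m Y A"
  shows "ramsey_product G m A"
  unfolding ramsey_product_def
proof (intro conjI allI impI assms(1))
  fix X assume "X \<subseteq> carrier G" "infinite X"
  then obtain Y where Y: "Y \<subseteq> X" "infinite Y" "distinct_words_in G m Y A"
    using assms(2) by blast
  obtain x where x: "inj_on x {..<length m}" "x ` {..<length m} \<subseteq> Y"
    using inj_on_tuple_in_infinite[OF Y(2)] .
  have "word_prod G m (x \<circ> \<sigma>) \<in> A" if "\<sigma> permutes {..<length m}" for \<sigma>
    using permutes_comp_inj_on_image[OF that x(1)] x(2) by (intro distinct_words_inD[OF Y(3)]) simp_all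
  then show "\<exists>x. inj_on x {..<length m} \<and> x ` {..<length m} \<subseteq> X \<and>
      (\<forall>\<sigma>. \<sigma> permutes {..<length m} \<longrightarrow> word_prod G m (x \<circ> \<sigma>) \<in> A)"
    using x(1) order_trans[OF x(2) Y(1)] by blast
qed

lemma ramsey_product_iff_distinct_words_in:
  assumes "A \<subseteq> carrier G"
  shows "ramsey_product G m A \<longleftrightarrow> (\<forall>X. X \<subseteq> carrier G \<longrightarrow> infinite X \<longrightarrow>
    (\<exists>Y. Y \<subseteq> X \<and> countable Y \<and> infinite Y \<and> distinct_words_in G m Y A))"
proof
  assume A: "ramsey_product G m A"
  show "\<forall>X. X \<subseteq> carrier G \<longrightarrow> infinite X \<longrightarrow>
    (\<exists>Y. Y \<subseteq> X \<and> countable Y \<and> infinite Y \<and> distinct_words_in G m Y A)"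
  proof (intro allI impI)
    fix X assume "X \<subseteq> carrier G" "infinite X"
    then obtain Y where Y: "Y \<subseteq> X" "infinite Y" "distinct_words_in G m Y A"
      using ramsey_product_imp_distinct_words_in[OF A] by blast
    obtain Z where Z: "Z \<subseteq> Y" "countable Z" "infinite Z"
      using infinite_countable_subset'[OF Y(2)] by blast
    have "distinct_words_in G m Z A"
      using distinct_words_in_mono[OF Y(3) Z(1) order_refl] .
    with Z order_trans[OF Z(1) Y(1)]
    show "\<exists>Y. Y \<subseteq> X \<and> countable Y \<and> infinite Y \<and> distinct_words_in G m Y A"
      by blast
  qed
next
  assume H: "\<forall>X. X \<subseteq> carrier G \<longrightarrow> infinite X \<longrightarrow>
    (\<exists>Y. Y \<subseteq> X \<and> countable Y \<and> infinite Y \<and> distinct_words_in G m Y A)"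
  show "ramsey_product G m A"
  proof (rule ramsey_product_if_distinct_words_in[OF assms])
    fix X assume "X \<subseteq> carrier G" "infinite X"
    then obtain Y where "Y \<subseteq> X" "infinite Y" "distinct_words_in G m Y A"
      using H by blast
    then show "\<exists>Y\<subseteq>X. infinite Y \<and> distinct_words_in G m Y A" by blast
  qed
qed

lemma ramsey_product_subset_carrier: "ramsey_product G m A \<Longrightarrow> A \<subseteq> carrier G"
  by (simp add: ramsey_product_def)

lemma ramsey_product_carrier:
  assumes "group G"
  shows "ramsey_product G m (carrier G)"
proof (rule ramsey_product_if_distinct_words_in[OF order_refl])
  fix X assume "X \<subseteq> carrier G" "infinite X"
  then show "\<exists>Y\<subseteq>X. infinite Y \<and> distinct_words_in G m Y (carrier G)"
    using distinct_words_in_carrier[OF assms] by blast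
qed

lemma not_ramsey_product_empty:
  assumes "infinite (carrier G)"
  shows "\<not> ramsey_product G m {}"
proof
  assume "ramsey_product G m {}"
  then obtain Y where "infinite Y" "distinct_words_in G m Y {}"
    using ramsey_product_imp_distinct_words_in[OF _ order_refl assms] by metis
  then show False using not_distinct_words_in_empty by metis
qed

lemma ramsey_product_Int:
  assumes A: "ramsey_product G m A" and B: "ramsey_product G m B"
  shows "ramsey_product G m (A \<inter> B)"
proof (rule ramsey_product_if_distinct_words_in)
  show "A \<inter> B \<subseteq> carrier G" using ramsey_product_subset_carrier[OF A] by blast
next
  fix X assume X: "X \<subseteq> carrier G" "infinite X"
  obtain Y where Y: "Y \<subseteq> X" "infinite Y" "distinct_words_in G m Y A"
    using ramsey_product_imp_distinct_words_in[OF A X] .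
  obtain Z where Z: "Z \<subseteq> Y" "infinite Z" "distinct_words_in G m Z B"
    using ramsey_product_imp_distinct_words_in[OF B order_trans[OF Y(1) X(1)] Y(2)] .
  have "distinct_words_in G m Z (A \<inter> B)"
    using distinct_words_in_mono[OF Y(3) Z(1) order_refl] Z(3) by (rule distinct_words_in_Int)
  with Z(2) order_trans[OF Z(1) Y(1)]
  show "\<exists>Z\<subseteq>X. infinite Z \<and> distinct_words_in G m Z (A \<inter> B)"
    by blast
qed

lemma ramsey_product_superset:
  assumes "ramsey_product G m A" "A \<subseteq> B" "B \<subseteq> carrier G"
  shows "ramsey_product G m B"
  unfolding ramsey_product_def
proof (intro conjI allI impI assms(3))
  fix X assume X: "X \<subseteq> carrier G" "infinite X"
  obtain x where x: "inj_on x {..<length m}" "x ` {..<length m} \<subseteq> X"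
    and A: "\<And>\<sigma>. \<sigma> permutes {..<length m} \<Longrightarrow> word_prod G m (x \<circ> \<sigma>) \<in> A"
    by (rule ramsey_productE[OF assms(1) X]) (rule that)
  show "\<exists>x. inj_on x {..<length m} \<and> x ` {..<length m} \<subseteq> X \<and>
      (\<forall>\<sigma>. \<sigma> permutes {..<length m} \<longrightarrow> word_prod G m (x \<circ> \<sigma>) \<in> B)"
    using x subsetD[OF assms(2) A] by blast
qed

lemma filter_on_set_ramsey_product:
  assumes "group G" "infinite (carrier G)"
  shows "filter_on_set (carrier G) {A. ramsey_product G m A}"
  unfolding filter_on_set_def
proof (intro conjI ballI allI impI)
  show "{A. ramsey_product G m A} \<subseteq> Pow (carrier G)"
    using ramsey_product_subset_carrier by blast
  show "carrier G \<in> {A. ramsey_product G m A}"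
    using ramsey_product_carrier[OF assms(1)] by simp
  show "{} \<notin> {A. ramsey_product G m A}"
    using not_ramsey_product_empty[OF assms(2)] by simp
  show "A \<inter> B \<in> {A. ramsey_product G m A}"
    if "A \<in> {A. ramsey_product G m A}" "B \<in> {A. ramsey_product G m A}" for A B
    using that ramsey_product_Int by simp
  show "B \<in> {A. ramsey_product G m A}"
    if "A \<in> {A. ramsey_product G m A}" "A \<subseteq> B \<and> B \<subseteq> carrier G" for A B
    using that ramsey_product_superset[of G m A B] by simp
qed

theorem theorem5p1:
  fixes G (structure) and m :: "int list"
  assumes "group G" and "infinite (carrier G)"
  shows "(\<forall>A. A \<subseteq> carrier G \<longrightarrow>
            (ramsey_product G m A \<longleftrightarrow>
              (\<forall>X. X \<subseteq> carrier G \<longrightarrow> infinite X \<longrightarrow>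
                 (\<exists>Y. Y \<subseteq> X \<and> countable Y \<and> infinite Y \<and>
                    (\<forall>y. inj_on y {..<length m} \<and> y ` {..<length m} \<subseteq> Y \<longrightarrow>
                         word_prod G m y \<in> A)))))
         \<and> filter_on_set (carrier G) {A. ramsey_product G m A}"
  using ramsey_product_iff_distinct_words_in[of _ G m, unfolded distinct_words_in_def]
    filter_on_set_ramsey_product[OF assms]
  by simp

end
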